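(* Let $a_{ij}>0$ ($i,j=1,2$) and $b_1,b_2>0$, and assume (A1) $\langle Ax,x\rangle>0$ for all $x\in\mathbb{R}^2\setminus\{0\}$, where $A=(a_{ij})$, and (A2) the matrix $\begin{pmatrix}b_1a_{11}&b_1a_{12}\\ b_2a_{21}&b_2a_{22}\end{pmatrix}$ has two real positive eigenvalues. Consider, for $\lambda>0$, $\alpha\in[0,1]$, $\tau>0$, the problem $$\dot x_1(t)=-\alpha\lambda\big(a_{11}x_1(t-\tau/\lambda)+a_{12}x_2(t-\tau/\lambda)\big)(b_1+x_1(t)),$$ $$\dot x_2(t)=-\alpha\lambda\big(a_{21}x_1(t-\tau/\lambda)+a_{22}x_2(t-\tau/\lambda)\big)(b_2+x_2(t)).\qquad (\ast)$$ Let $\lambda_1,\lambda_2\in\mathbb{R}^+$ with $\lambda_1<\lambda_2$. Then: (1) there exist positive numbers $m_0,d_1,d_2,d_3,d_4$ such that for each $\lambda\in[\lambda_1,\lambda_2]$, $\alpha\in[0,1]$ and $\tau\ge 1$, every solution $(x_1,x_2)\in\Theta_0$ of $(\ast)$ satisfies $|\dot x_i|_\infty<m_0$ and $|\ddot x_i|_\infty<m_0$ for $i=1,2$, and $$-b_1<-d_1<x_1(t)<d_3,\qquad -b_2<-d_2<x_2(t)<d_4\quad\text{for all }t\in[0,2\pi];$$ (2) there exists $\alpha_0\in(0,1)$ such that for $\alpha\in[0,\alpha_0]$ (and $\lambda\in[\lambda_1,\lambda_2]$) problem $(\ast)$ has no nontrivial solution $(x_1,x_2)\in\Theta_0$.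
   Context: $\hat E$ denotes the Banach space of functions $x\in C([0,2\pi],\mathbb{R})$ with $\int_0^{2\pi}\dot x(t)^2\,dt<\infty$, $x(0)=x(2\pi)$ and $\int_0^{2\pi}x(t)\,dt=0$, with norm $\|x\|^2=\int_0^{2\pi}(\dot x(t)^2+x(t)^2)\,dt$; such functions are identified with their $2\pi$-periodic extensions to $\mathbb{R}$. $E=\hat E\times\hat E$, and $\Theta_0=\{(x_1,x_2)\in E: x_i(t)>-b_i \text{ for } t\in[0,2\pi],\ i=1,2\}$. $|u|_\infty=\sup_{t\in[0,2\pi]}|u(t)|$. A solution of $(\ast)$ is a pair in $E$ satisfying the equations for all $t$; nontrivial means not identically zero. *)

theory Defs
  imports "HOL-Analysis.Analysis"
begin

definition mat2 :: "real \<Rightarrow> real \<Rightarrow> real \<Rightarrow> real \<Rightarrow> real^2^2" where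
  "mat2 p q r s = (\<chi> i j. if i = 1 then (if j = 1 then p else q) else (if j = 1 then r else s))"

definition real_eigenvalue :: "real^'n^'n \<Rightarrow> real \<Rightarrow> bool" where
  "real_eigenvalue M mu \<longleftrightarrow> (\<exists>v. v \<noteq> 0 \<and> M *v v = mu *s v)"

text \<open>Membership in the space hat E (identified with 2 pi-periodic extensions):
  continuous, 2 pi-periodic, mean zero, and absolutely continuous on [0, 2 pi]
  with square integrable derivative g.\<close>
definition hatE :: "(real \<Rightarrow> real) \<Rightarrow> bool" where
  "hatE x \<longleftrightarrow> continuous_on UNIV x \<and> (\<forall>t. x (t + 2*pi) = x t) \<and>
     integral {0..2*pi} x = 0 \<and>
     (\<exists>g. g integrable_on {0..2*pi} \<and> (\<lambda>t. (g t)^2) integrable_on {0..2*pi} \<and>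
          (\<forall>t\<in>{0..2*pi}. x t = x 0 + integral {0..t} g))"

definition Theta0 :: "real \<Rightarrow> real \<Rightarrow> (real \<Rightarrow> real) \<Rightarrow> (real \<Rightarrow> real) \<Rightarrow> bool" where
  "Theta0 b1 b2 x1 x2 \<longleftrightarrow> hatE x1 \<and> hatE x2 \<and> (\<forall>t\<in>{0..2*pi}. x1 t > - b1 \<and> x2 t > - b2)"

definition is_solution ::
  "real \<Rightarrow> real \<Rightarrow> real \<Rightarrow> real \<Rightarrow> real \<Rightarrow> real \<Rightarrow> real \<Rightarrow> real \<Rightarrow> real \<Rightarrow>
   (real \<Rightarrow> real) \<Rightarrow> (real \<Rightarrow> real) \<Rightarrow> bool" where
  "is_solution a11 a12 a21 a22 b1 b2 lam alpha tau x1 x2 \<longleftrightarrow>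
     hatE x1 \<and> hatE x2 \<and>
     (\<forall>t. (x1 has_real_derivative
             (- alpha * lam * (a11 * x1 (t - tau/lam) + a12 * x2 (t - tau/lam)) * (b1 + x1 t))) (at t)) \<and>
     (\<forall>t. (x2 has_real_derivative
             (- alpha * lam * (a21 * x1 (t - tau/lam) + a22 * x2 (t - tau/lam)) * (b2 + x2 t))) (at t))"

end

theory Submission
  imports Defs "HOL-Library.Periodic_Fun"
begin

(* Each component solves a scalar equation x' = - k(t) (b + x) in which, on Theta_0, the
   coefficient k is bounded below by a constant - c.  So ln (b + x) has derivative at most c
   and, being 2 pi-periodic, oscillates by at most 2 pi c; as x has mean zero it takes a
   nonpositive and a nonnegative value, hence ln (b + x) stays within 2 pi c of ln b.  This
   bounds x uniformly, and the equation then bounds x' and x''.  For part (2), |x'| is at most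
   alpha C |x|_inf, while a mean-zero periodic function satisfies |x|_inf <= 2 pi |x'|_inf;
   so |x|_inf <= 2 pi alpha C |x|_inf, which forces x = 0 once 2 pi alpha C < 1. *)

lemma periodic_value_in_interval:
  fixes f :: "real \<Rightarrow> 'a"
  assumes "T > 0" and "\<forall>t. f (t + T) = f t"
  shows "\<exists>s\<in>{a..a+T}. f t = f s"
proof -
  interpret periodic_fun_simple f T
    using assms(2) by unfold_locales blast
  define n where "n = \<lfloor>(t - a) / T\<rfloor>"
  have "of_int n * T \<le> t - a" "t - a < (of_int n + 1) * T"
    unfolding n_def using assms(1) by (rule floor_divide_lower, rule floor_divide_upper)
  then have "t - of_int n * T \<in> {a..a+T}"
    by (auto simp: algebra_simps)
  moreover have "f (t - of_int n * T) = f t"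
    using minus_of_int .
  ultimately show ?thesis
    by metis
qed

lemma zero_integral_imp_nonpos_point:
  fixes f :: "real \<Rightarrow> real"
  assumes "continuous_on {a..b} f" and "a < b" and "integral {a..b} f = 0"
  shows "\<exists>t\<in>{a..b}. f t \<le> 0"
proof (rule ccontr)
  assume "\<not> ?thesis"
  then have pos: "\<forall>t\<in>{a..b}. f t > 0"
    by force
  then have "\<forall>t\<in>{a..b}. f t = 0"
    using integral_eq_0_iff[OF assms(1,2)] assms(3) by (meson less_imp_le)
  then show False
    using pos assms(2) by fastforce
qed

lemma zero_integral_imp_nonneg_point:
  fixes f :: "real \<Rightarrow> real"
  assumes "continuous_on {a..b} f" and "a < b" and "integral {a..b} f = 0"
  shows "\<exists>t\<in>{a..b}. f t \<ge> 0"
  using zero_integral_imp_nonpos_point[of a b "\<lambda>t. - f t"] assms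
  by (auto simp: continuous_on_minus)

lemma periodic_deriv_le_imp_diff_le:
  fixes u u' :: "real \<Rightarrow> real"
  assumes "T > 0" and "\<forall>t. u (t + T) = u t"
    and "\<forall>t. (u has_real_derivative u' t) (at t)" and "\<forall>t. u' t \<le> c" and "c \<ge> 0"
  shows "u t - u s \<le> c * T"
proof -
  obtain r where r: "r \<in> {t - T..t}" "u s = u r"
    using periodic_value_in_interval[OF assms(1,2), where a = "t - T" and t = s] by auto
  have "u t - c * t \<le> u r - c * r"
  proof (rule DERIV_nonpos_imp_nonincreasing[where f = "\<lambda>t. u t - c * t"])
    show "\<exists>y. ((\<lambda>t. u t - c * t) has_real_derivative y) (at x) \<and> y \<le> 0" for x
      using assms(3,4) by (metis DERIV_cmult_Id DERIV_diff diff_le_0_iff_le)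
  qed (use r in auto)
  moreover have "c * (t - r) \<le> c * T"
    using r assms(5) by (intro mult_left_mono) auto
  ultimately show ?thesis
    using r by (simp add: algebra_simps)
qed

lemma hatE_periodic: "hatE x \<Longrightarrow> \<forall>t. x (t + 2*pi) = x t"
  unfolding hatE_def by blast

lemma hatE_value_in_period: "hatE x \<Longrightarrow> \<exists>s\<in>{0..2*pi}. x t = x s"
  using periodic_value_in_interval[of "2*pi" x 0 t] hatE_periodic by simp

lemma hatE_continuous_on: "hatE x \<Longrightarrow> continuous_on S x"
  unfolding hatE_def using continuous_on_subset by blast

lemma hatE_nonpos_point: "hatE x \<Longrightarrow> \<exists>t\<in>{0..2*pi}. x t \<le> 0"
  and hatE_nonneg_point: "hatE x \<Longrightarrow> \<exists>t\<in>{0..2*pi}. x t \<ge> 0"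
  using zero_integral_imp_nonpos_point[of 0 "2*pi" x] zero_integral_imp_nonneg_point[of 0 "2*pi" x]
    hatE_continuous_on unfolding hatE_def by simp_all

lemma hatE_attains_abs_max:
  assumes hx: "hatE x"
  shows "\<exists>t0. \<forall>t. \<bar>x t\<bar> \<le> \<bar>x t0\<bar>"
proof -
  have "continuous_on {0..2*pi} (\<lambda>t. \<bar>x t\<bar>)"
    using hatE_continuous_on[OF hx] by (rule continuous_on_rabs)
  then obtain t0 where t0: "\<forall>s\<in>{0..2*pi}. \<bar>x s\<bar> \<le> \<bar>x t0\<bar>"
    using continuous_attains_sup[OF compact_Icc, of 0 "2*pi"] by auto
  have "\<bar>x t\<bar> \<le> \<bar>x t0\<bar>" for t
  proof -
    obtain s where "s \<in> {0..2*pi}" "x t = x s"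
      using hatE_value_in_period[OF hx] by blast
    then show ?thesis
      using t0 by simp
  qed
  then show ?thesis
    by blast
qed

lemma hatE_abs_le_deriv_bound:
  fixes x x' :: "real \<Rightarrow> real"
  assumes hx: "hatE x" and dx: "\<forall>t. (x has_real_derivative x' t) (at t)"
    and bound: "\<forall>t. \<bar>x' t\<bar> \<le> B"
  shows "\<bar>x t\<bar> \<le> 2*pi*B"
proof -
  have lipschitz: "\<bar>x s - x r\<bar> \<le> B * \<bar>s - r\<bar>" for s r
    using field_differentiable_bound[of UNIV x x' B s r] dx bound by auto
  have near: "\<bar>x s - x r\<bar> \<le> 2*pi*B" if "s \<in> {0..2*pi}" "r \<in> {0..2*pi}" for s r
  proof -
    have "B \<ge> 0"
      using bound abs_ge_zero order_trans by blast
    then have "B * \<bar>s - r\<bar> \<le> B * (2*pi)"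
      using that by (intro mult_left_mono) auto
    then show ?thesis
      using lipschitz[of s r] by (metis mult.commute order_trans)
  qed
  obtain s where s: "s \<in> {0..2*pi}" "x t = x s"
    using hatE_value_in_period[OF hx] by blast
  obtain q where q: "q \<in> {0..2*pi}" "x q \<le> 0"
    using hatE_nonpos_point[OF hx] by blast
  obtain p where p: "p \<in> {0..2*pi}" "x p \<ge> 0"
    using hatE_nonneg_point[OF hx] by blast
  show ?thesis
    using near[OF s(1) q(1)] near[OF s(1) p(1)] q(2) p(2) s(2) by linarith
qed

lemma hatE_logistic_bounds:
  fixes x k :: "real \<Rightarrow> real"
  assumes hx: "hatE x" and b: "b > 0" and above: "\<forall>t. x t > -b"
    and dx: "\<forall>t. (x has_real_derivative - k t * (b + x t)) (at t)"
    and k: "\<forall>t. k t \<ge> -c" and c: "c \<ge> 0"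
  shows "b * exp (-(2*pi*c)) \<le> b + x t \<and> b + x t \<le> b * exp (2*pi*c)"
proof -
  define u where "u t = ln (b + x t)" for t
  have pos: "b + x t > 0" for t
    using above[rule_format, of t] by linarith
  have du: "(u has_real_derivative - k t) (at t)" for t
  proof -
    have "((\<lambda>t. b + x t) has_real_derivative - k t * (b + x t)) (at t)"
      using DERIV_add[OF DERIV_const dx[rule_format, of t]] by simp
    then have "(u has_real_derivative 1 / (b + x t) * (- k t * (b + x t))) (at t)"
      unfolding u_def by (rule DERIV_chain2[where g = "\<lambda>t. b + x t", OF DERIV_ln_divide[OF pos[of t]]])
    then show ?thesis
      using pos[of t] by simp
  qed
  have "\<forall>t. u (t + 2*pi) = u t"
    unfolding u_def using hatE_periodic[OF hx] by simp
  moreover have "\<forall>t. - k t \<le> c"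
    using k by (simp add: minus_le_iff)
  ultimately have "u s - u r \<le> c * (2*pi)" for s r
    using du c by (intro periodic_deriv_le_imp_diff_le[of "2*pi" u "\<lambda>t. - k t"]) auto
  then have osc: "u s - u r \<le> 2*pi*c" for s r
    by (simp add: mult.commute)
  obtain q where "x q \<le> 0"
    using hatE_nonpos_point[OF hx] by blast
  then have "u q \<le> ln b"
    unfolding u_def using pos[of q] b by (subst ln_le_cancel_iff) auto
  obtain p where "x p \<ge> 0"
    using hatE_nonneg_point[OF hx] by blast
  then have "u p \<ge> ln b"
    unfolding u_def using pos[of p] b by (subst ln_le_cancel_iff) auto
  have "ln b - 2*pi*c \<le> u t" "u t \<le> ln b + 2*pi*c"
    using osc[of t q] osc[of p t] \<open>u q \<le> ln b\<close> \<open>u p \<ge> ln b\<close> by linarith+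
  then have "exp (ln b - 2*pi*c) \<le> exp (u t)" "exp (u t) \<le> exp (ln b + 2*pi*c)"
    by simp_all
  moreover have "exp (u t) = b + x t"
    unfolding u_def using pos[of t] by simp
  moreover have "exp (ln b - 2*pi*c) = b * exp (-(2*pi*c))" "exp (ln b + 2*pi*c) = b * exp (2*pi*c)"
    using b by (metis exp_add exp_ln diff_conv_add_uminus, metis exp_add exp_ln)
  ultimately show ?thesis
    by linarith
qed

lemma abs_nonneg_comb_le:
  fixes p q y z :: real
  assumes "0 \<le> p" "0 \<le> q" "p + q \<le> S" "\<bar>y\<bar> \<le> N" "\<bar>z\<bar> \<le> N"
  shows "\<bar>p * y + q * z\<bar> \<le> S * N"
proof -
  have "\<bar>p * y + q * z\<bar> \<le> p * \<bar>y\<bar> + q * \<bar>z\<bar>"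
    using assms(1,2) by (metis abs_mult abs_of_nonneg abs_triangle_ineq)
  also have "\<dots> \<le> (p + q) * N"
    using assms by (simp add: distrib_right add_mono mult_left_mono)
  also have "\<dots> \<le> S * N"
    using assms by (intro mult_right_mono) auto
  finally show ?thesis .
qed

lemma mult_le_if_le_one:
  fixes a b c :: real
  assumes "0 \<le> a" "a \<le> 1" "0 \<le> b" "b \<le> c"
  shows "a * b \<le> c"
  using assms by (meson mult_left_le_one_le order_trans)

(* Exchanging the two components maps the system to itself; hence the estimates below are
   proved for the first component only. *)
lemma is_solution_swap:
  "is_solution a11 a12 a21 a22 b1 b2 lam alpha tau x1 x2 \<longleftrightarrow>
   is_solution a22 a21 a12 a11 b2 b1 lam alpha tau x2 x1"
  unfolding is_solution_def by (auto simp: add.commute)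

lemma Theta0_swap: "Theta0 b1 b2 x1 x2 \<longleftrightarrow> Theta0 b2 b1 x2 x1"
  unfolding Theta0_def by auto

lemma Theta0_fst_gt:
  assumes "Theta0 b1 b2 x1 x2"
  shows "x1 t > - b1"
proof -
  obtain s where "s \<in> {0..2*pi}" "x1 t = x1 s"
    using assms hatE_value_in_period unfolding Theta0_def by blast
  then show ?thesis
    using assms unfolding Theta0_def by simp
qed

lemma solution_fst_deriv:
  assumes "is_solution a11 a12 a21 a22 b1 b2 lam alpha tau x1 x2"
  shows "(x1 has_real_derivative deriv x1 t) (at t)"
    and "deriv x1 = (\<lambda>t. - alpha * lam * (a11 * x1 (t - tau/lam) + a12 * x2 (t - tau/lam)) * (b1 + x1 t))"
proof -
  have dx: "(x1 has_real_derivative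
      - alpha * lam * (a11 * x1 (t - tau/lam) + a12 * x2 (t - tau/lam)) * (b1 + x1 t)) (at t)" for t
    using assms unfolding is_solution_def by blast
  show deriv_eq: "deriv x1 = (\<lambda>t. - alpha * lam * (a11 * x1 (t - tau/lam) + a12 * x2 (t - tau/lam)) * (b1 + x1 t))"
    by (rule ext) (rule DERIV_imp_deriv[OF dx])
  show "(x1 has_real_derivative deriv x1 t) (at t)"
    unfolding deriv_eq by (rule dx)
qed

lemma solution_fst_exp_bounds:
  assumes sol: "is_solution a11 a12 a21 a22 b1 b2 lam alpha tau x1 x2" and th: "Theta0 b1 b2 x1 x2"
    and a: "0 \<le> a11" "0 \<le> a12" "a11 + a12 \<le> S" and b: "0 < b1" "0 < b2"
    and alpha: "0 \<le> alpha" "alpha \<le> 1" and lam: "0 < lam" "lam \<le> lam2"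
  shows "b1 * exp (-(2*pi*(lam2*S*(b1+b2)))) \<le> b1 + x1 t \<and> b1 + x1 t \<le> b1 * exp (2*pi*(lam2*S*(b1+b2)))"
proof -
  define M where "M = S * (b1 + b2)"
  define w where "w t = a11 * x1 (t - tau/lam) + a12 * x2 (t - tau/lam)" for t
  have M: "0 \<le> M"
    unfolding M_def using a b by simp
  have w: "- M \<le> w t" for t
  proof -
    have "- b1 \<le> x1 (t - tau/lam)" "- b2 \<le> x2 (t - tau/lam)"
      using Theta0_fst_gt[OF th] Theta0_fst_gt[OF Theta0_swap[THEN iffD1, OF th]] by (simp_all add: less_imp_le)
    then have "- (a11 * b1) \<le> a11 * x1 (t - tau/lam)" "- (a12 * b2) \<le> a12 * x2 (t - tau/lam)"
      using mult_left_mono[of "- b1" _ a11] mult_left_mono[of "- b2" _ a12] a(1,2) by simp_all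
    moreover have "a11 * b1 + a12 * b2 \<le> (a11 + a12) * (b1 + b2)"
      using a b by (simp add: algebra_simps)
    moreover have "(a11 + a12) * (b1 + b2) \<le> M"
      unfolding M_def using a b by (intro mult_right_mono) auto
    ultimately show ?thesis
      unfolding w_def by linarith
  qed
  have rate: "0 \<le> alpha * lam" "alpha * lam \<le> lam2"
    using alpha lam mult_le_if_le_one by simp_all
  have k: "\<forall>t. - (lam2 * M) \<le> alpha * lam * w t"
  proof
    fix t
    have "- (alpha * lam * M) \<le> alpha * lam * w t"
      using mult_left_mono[OF w rate(1)] by simp
    moreover have "alpha * lam * M \<le> lam2 * M"
      using mult_right_mono[OF rate(2) M] .
    ultimately show "- (lam2 * M) \<le> alpha * lam * w t"
      by linarith
  qed
  have dx: "\<forall>t. (x1 has_real_derivative - (alpha * lam * w t) * (b1 + x1 t)) (at t)"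
    using solution_fst_deriv[OF sol] unfolding w_def by simp
  have "hatE x1"
    using sol unfolding is_solution_def by blast
  moreover have "\<forall>t. x1 t > - b1"
    using Theta0_fst_gt[OF th] by blast
  moreover have "0 \<le> lam2 * M"
    using M lam by simp
  ultimately have "b1 * exp (-(2*pi*(lam2*M))) \<le> b1 + x1 t \<and> b1 + x1 t \<le> b1 * exp (2*pi*(lam2*M))"
    using hatE_logistic_bounds[OF _ b(1) _ dx k] by blast
  then show ?thesis
    unfolding M_def by (simp add: mult.assoc)
qed

lemma DERIV_at_shifted:
  "(f has_real_derivative D) (at (t - s)) \<Longrightarrow> ((\<lambda>t. f (t - s)) has_real_derivative D) (at t)"
  using DERIV_shift[of f D t "- s"] by simp

lemma solution_fst_deriv_abs_le:
  assumes sol: "is_solution a11 a12 a21 a22 b1 b2 lam alpha tau x1 x2"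
    and a: "0 \<le> a11" "0 \<le> a12" "a11 + a12 \<le> S"
    and alpha: "0 \<le> alpha" "alpha \<le> A" and lam: "0 < lam" "lam \<le> lam2"
    and x: "\<forall>t. \<bar>x1 t\<bar> \<le> N" "\<forall>t. \<bar>x2 t\<bar> \<le> N" "\<forall>t. \<bar>b1 + x1 t\<bar> \<le> D"
  shows "\<bar>deriv x1 t\<bar> \<le> A * lam2 * (S * N) * D"
proof -
  define w where "w = a11 * x1 (t - tau/lam) + a12 * x2 (t - tau/lam)"
  have w: "\<bar>w\<bar> \<le> S * N"
    unfolding w_def using abs_nonneg_comb_le[OF a] x(1,2) by blast
  have "alpha * lam \<le> A * lam2"
    using alpha lam by (intro mult_mono) auto
  have "\<bar>deriv x1 t\<bar> = alpha * lam * \<bar>w\<bar> * \<bar>b1 + x1 t\<bar>"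
    unfolding solution_fst_deriv(2)[OF sol] w_def using alpha lam by (simp add: abs_mult)
  also have "\<dots> \<le> A * lam2 * (S * N) * D"
    using \<open>alpha * lam \<le> A * lam2\<close> w x(3) alpha lam
    by (intro mult_mono) (auto intro: order_trans[OF abs_ge_zero])
  finally show ?thesis .
qed

lemma solution_fst_deriv2_abs_le:
  assumes sol: "is_solution a11 a12 a21 a22 b1 b2 lam alpha tau x1 x2"
    and a: "0 \<le> a11" "0 \<le> a12" "a11 + a12 \<le> S"
    and alpha: "0 \<le> alpha" "alpha \<le> 1" and lam: "0 < lam" "lam \<le> lam2"
    and x: "\<forall>t. \<bar>x1 t\<bar> \<le> D" "\<forall>t. \<bar>x2 t\<bar> \<le> D" "\<forall>t. \<bar>b1 + x1 t\<bar> \<le> D"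
    and dx: "\<forall>t. \<bar>deriv x1 t\<bar> \<le> M" "\<forall>t. \<bar>deriv x2 t\<bar> \<le> M"
  shows "\<bar>deriv (deriv x1) t\<bar> \<le> 2 * lam2 * (S * D * M)"
proof -
  define w where "w t = a11 * x1 (t - tau/lam) + a12 * x2 (t - tau/lam)" for t
  define w' where "w' t = a11 * deriv x1 (t - tau/lam) + a12 * deriv x2 (t - tau/lam)" for t
  have "(w has_real_derivative w' t) (at t)"
    unfolding w_def w'_def
    by (intro DERIV_add DERIV_cmult DERIV_at_shifted solution_fst_deriv(1)[OF sol]
        solution_fst_deriv(1)[OF is_solution_swap[THEN iffD1, OF sol]])
  moreover have "((\<lambda>t. b1 + x1 t) has_real_derivative deriv x1 t) (at t)"
    using DERIV_add[OF DERIV_const solution_fst_deriv(1)[OF sol]] by simp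
  ultimately have "((\<lambda>t. - (alpha * lam) * (w t * (b1 + x1 t))) has_real_derivative
      - (alpha * lam) * (w' t * (b1 + x1 t) + deriv x1 t * w t)) (at t)"
    by (intro DERIV_cmult DERIV_mult)
  moreover have "deriv x1 = (\<lambda>t. - (alpha * lam) * (w t * (b1 + x1 t)))"
    unfolding solution_fst_deriv(2)[OF sol] w_def by (simp add: fun_eq_iff mult.assoc)
  ultimately have dd: "deriv (deriv x1) t = - (alpha * lam) * (w' t * (b1 + x1 t) + deriv x1 t * w t)"
    by (simp add: DERIV_imp_deriv)
  have "0 \<le> S" "0 \<le> M"
    using a dx(1) abs_ge_zero order_trans by (linarith, blast)
  then have "\<bar>w' t * (b1 + x1 t)\<bar> \<le> (S * M) * D"
    unfolding w'_def abs_mult using abs_nonneg_comb_le[OF a] dx x(3)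
    by (intro mult_mono) auto
  moreover have "\<bar>deriv x1 t * w t\<bar> \<le> M * (S * D)"
    unfolding w_def abs_mult using abs_nonneg_comb_le[OF a] dx x(1,2)
    by (intro mult_mono) (auto intro: order_trans[OF abs_ge_zero])
  ultimately have "\<bar>w' t * (b1 + x1 t) + deriv x1 t * w t\<bar> \<le> 2 * (S * D * M)"
    by (smt (verit) mult.commute mult.left_commute)
  moreover have "alpha * lam \<le> lam2"
    using alpha lam mult_le_if_le_one by simp
  ultimately have "alpha * lam * \<bar>w' t * (b1 + x1 t) + deriv x1 t * w t\<bar> \<le> lam2 * (2 * (S * D * M))"
    using alpha lam by (intro mult_mono) auto
  then show ?thesis
    unfolding dd abs_mult abs_minus using alpha lam by simp
qed

lemma solution_bounds:
  fixes a11 a12 a21 a22 b1 b2 lam2 :: real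
  defines "K \<equiv> 2*pi*(lam2*(a11+a12+a21+a22)*(b1+b2))"
  defines "D \<equiv> (b1 + b2) * exp K"
  assumes sol: "is_solution a11 a12 a21 a22 b1 b2 lam alpha tau x1 x2" and th: "Theta0 b1 b2 x1 x2"
    and a: "0 < a11" "0 < a12" "0 < a21" "0 < a22" and b: "0 < b1" "0 < b2"
    and alpha: "0 \<le> alpha" "alpha \<le> 1" and lam: "0 < lam" "lam \<le> lam2"
  shows "b1 * exp (-K) \<le> b1 + x1 t" "b1 + x1 t \<le> b1 * exp K"
    and "b2 * exp (-K) \<le> b2 + x2 t" "b2 + x2 t \<le> b2 * exp K"
    and "\<bar>x1 t\<bar> \<le> D" "\<bar>x2 t\<bar> \<le> D" "\<bar>b1 + x1 t\<bar> \<le> D" "\<bar>b2 + x2 t\<bar> \<le> D"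
proof -
  show fst: "b1 * exp (-K) \<le> b1 + x1 t" "b1 + x1 t \<le> b1 * exp K"
    using solution_fst_exp_bounds[where S = "a11+a12+a21+a22" and t = t, OF sol th _ _ _ b alpha lam] a b alpha lam unfolding K_def by auto
  have "b2 * exp (-K) \<le> b2 + x2 t \<and> b2 + x2 t \<le> b2 * exp K"
    using solution_fst_exp_bounds[where S = "a11+a12+a21+a22" and t = t,
        OF is_solution_swap[THEN iffD1, OF sol] Theta0_swap[THEN iffD1, OF th] _ _ _ b(2,1) alpha lam] a b alpha lam unfolding K_def by (auto simp: add.commute)
  then show snd: "b2 * exp (-K) \<le> b2 + x2 t" "b2 + x2 t \<le> b2 * exp K"
    by auto
  have "0 \<le> K"
    unfolding K_def using a b lam by simp
  then have "b1 \<le> b1 * exp K" "b2 \<le> b2 * exp K"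
    using b by simp_all
  moreover have "b1 * exp K \<le> D" "b2 * exp K \<le> D"
    unfolding D_def using b by (simp_all add: distrib_right)
  moreover have "0 < b1 * exp (-K)" "0 < b2 * exp (-K)"
    using b by simp_all
  ultimately show "\<bar>x1 t\<bar> \<le> D" "\<bar>x2 t\<bar> \<le> D" "\<bar>b1 + x1 t\<bar> \<le> D" "\<bar>b2 + x2 t\<bar> \<le> D"
    using fst snd b unfolding abs_le_iff by (intro conjI; linarith)+
qed

lemma solution_a_priori_bounds:
  fixes a11 a12 a21 a22 b1 b2 lam1 lam2 :: real
  assumes a: "a11 > 0" "a12 > 0" "a21 > 0" "a22 > 0" and b: "b1 > 0" "b2 > 0"
    and lam12: "0 < lam1" "lam1 < lam2"
  shows "\<exists>m0 d1 d2 d3 d4. m0 > 0 \<and> d1 > 0 \<and> d2 > 0 \<and> d3 > 0 \<and> d4 > 0 \<and>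
            -b1 < -d1 \<and> -b2 < -d2 \<and>
            (\<forall>lam\<in>{lam1..lam2}. \<forall>alpha\<in>{0..1}. \<forall>tau\<ge>1. \<forall>x1 x2.
               is_solution a11 a12 a21 a22 b1 b2 lam alpha tau x1 x2 \<and> Theta0 b1 b2 x1 x2 \<longrightarrow>
               (\<forall>t\<in>{0..2*pi}.
                  \<bar>deriv x1 t\<bar> < m0 \<and> \<bar>deriv x2 t\<bar> < m0 \<and>
                  \<bar>deriv (deriv x1) t\<bar> < m0 \<and> \<bar>deriv (deriv x2) t\<bar> < m0 \<and>
                  -d1 < x1 t \<and> x1 t < d3 \<and> -d2 < x2 t \<and> x2 t < d4))"
proof -
  define S where "S = a11 + a12 + a21 + a22"
  define K where "K = 2*pi*(lam2*S*(b1+b2))"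
  define D where "D = (b1 + b2) * exp K"
  define M1 where "M1 = lam2 * (S * D) * D"
  define M2 where "M2 = 2 * lam2 * (S * D * M1)"
  define m0 where "m0 = M1 + M2 + 1"
  define d1 where "d1 = b1 - b1 * exp (-K) / 2"
  define d2 where "d2 = b2 - b2 * exp (-K) / 2"
  have M: "0 \<le> M1" "0 \<le> M2"
    unfolding M1_def M2_def D_def S_def using a b lam12 by simp_all
  have e: "0 < b1 * exp (-K)" "b1 * exp (-K) \<le> b1" "0 < b2 * exp (-K)" "b2 * exp (-K) \<le> b2"
    unfolding K_def S_def using a b lam12 by simp_all
  have "\<bar>deriv x1 t\<bar> < m0 \<and> \<bar>deriv x2 t\<bar> < m0 \<and>
      \<bar>deriv (deriv x1) t\<bar> < m0 \<and> \<bar>deriv (deriv x2) t\<bar> < m0 \<and>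
      -d1 < x1 t \<and> x1 t < b1 * exp K \<and> -d2 < x2 t \<and> x2 t < b2 * exp K"
    if "lam \<in> {lam1..lam2}" "alpha \<in> {0..1}" and sol: "is_solution a11 a12 a21 a22 b1 b2 lam alpha tau x1 x2"
      and th: "Theta0 b1 b2 x1 x2" for lam alpha tau x1 x2 t
  proof -
    have alpha: "0 \<le> alpha" "alpha \<le> 1" and lam: "0 < lam" "lam \<le> lam2"
      using that(1,2) lam12 by auto
    have sol': "is_solution a22 a21 a12 a11 b2 b1 lam alpha tau x2 x1"
      using sol is_solution_swap by blast
    note bounds = solution_bounds[OF sol th a b alpha lam, folded S_def, folded K_def, folded D_def]
    have S: "a11 + a12 \<le> S" "a22 + a21 \<le> S" and a': "0 \<le> a11" "0 \<le> a12" "0 \<le> a21" "0 \<le> a22"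
      unfolding S_def using a by auto
    have d1: "\<forall>u. \<bar>deriv x1 u\<bar> \<le> M1" and d2: "\<forall>u. \<bar>deriv x2 u\<bar> \<le> M1"
      using solution_fst_deriv_abs_le[OF sol a'(1,2) S(1) alpha(1) _ lam, of 1 D D]
        solution_fst_deriv_abs_le[OF sol' a'(4,3) S(2) alpha(1) _ lam, of 1 D D] bounds alpha
      unfolding M1_def by auto
    have "\<bar>deriv (deriv x1) t\<bar> \<le> M2" "\<bar>deriv (deriv x2) t\<bar> \<le> M2"
      using solution_fst_deriv2_abs_le[OF sol a'(1,2) S(1) alpha lam _ _ _ d1 d2, of D]
        solution_fst_deriv2_abs_le[OF sol' a'(4,3) S(2) alpha lam _ _ _ d2 d1, of D] bounds
      unfolding M2_def by auto
    moreover note d1[rule_format, of t] d2[rule_format, of t] bounds(1-4)[of t]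
    ultimately show ?thesis
      unfolding m0_def d1_def d2_def using M e by linarith
  qed
  moreover have "0 < m0" "0 < d1" "0 < d2" "-b1 < -d1" "-b2 < -d2"
    unfolding m0_def d1_def d2_def using M e b by linarith+
  moreover have "0 < b1 * exp K" "0 < b2 * exp K"
    using b by simp_all
  ultimately show ?thesis
    by (intro exI[of _ m0] exI[of _ d1] exI[of _ d2] exI[of _ "b1 * exp K"] exI[of _ "b2 * exp K"])
      blast
qed

lemma solution_trivial_for_small_alpha:
  fixes a11 a12 a21 a22 b1 b2 lam1 lam2 :: real
  assumes a: "a11 > 0" "a12 > 0" "a21 > 0" "a22 > 0" and b: "b1 > 0" "b2 > 0"
    and lam12: "0 < lam1" "lam1 < lam2"
  shows "\<exists>alpha0. 0 < alpha0 \<and> alpha0 < 1 \<and>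
            (\<forall>alpha\<in>{0..alpha0}. \<forall>lam\<in>{lam1..lam2}. \<forall>tau\<ge>1. \<forall>x1 x2.
               is_solution a11 a12 a21 a22 b1 b2 lam alpha tau x1 x2 \<and> Theta0 b1 b2 x1 x2 \<longrightarrow>
               x1 = (\<lambda>_. 0) \<and> x2 = (\<lambda>_. 0))"
proof -
  define S where "S = a11 + a12 + a21 + a22"
  define K where "K = 2*pi*(lam2*S*(b1+b2))"
  define D where "D = (b1 + b2) * exp K"
  define L where "L = 2*pi*lam2*S*D"
  define alpha0 where "alpha0 = 1 / (L + 2)"
  have "0 \<le> L"
    unfolding L_def D_def K_def S_def using a b lam12 by simp
  then have alpha0: "0 < alpha0" "alpha0 < 1" "alpha0 * L < 1"
    unfolding alpha0_def by (simp_all add: field_simps)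
  have "x1 = (\<lambda>_. 0) \<and> x2 = (\<lambda>_. 0)"
    if "alpha \<in> {0..alpha0}" "lam \<in> {lam1..lam2}" and sol: "is_solution a11 a12 a21 a22 b1 b2 lam alpha tau x1 x2"
      and th: "Theta0 b1 b2 x1 x2" for alpha lam tau x1 x2
  proof -
    have alpha: "0 \<le> alpha" "alpha \<le> 1" "alpha \<le> alpha0" and lam: "0 < lam" "lam \<le> lam2"
      using that(1,2) alpha0 lam12 by auto
    have sol': "is_solution a22 a21 a12 a11 b2 b1 lam alpha tau x2 x1"
      using sol is_solution_swap by blast
    note bounds = solution_bounds[OF sol th a b alpha(1,2) lam, folded S_def, folded K_def, folded D_def]
    have S: "a11 + a12 \<le> S" "a22 + a21 \<le> S" and a': "0 \<le> a11" "0 \<le> a12" "0 \<le> a21" "0 \<le> a22"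
      unfolding S_def using a by auto
    have hx: "hatE x1" "hatE x2"
      using sol unfolding is_solution_def by blast+
    obtain t1 t2 where "\<forall>t. \<bar>x1 t\<bar> \<le> \<bar>x1 t1\<bar>" "\<forall>t. \<bar>x2 t\<bar> \<le> \<bar>x2 t2\<bar>"
      using hatE_attains_abs_max[OF hx(1)] hatE_attains_abs_max[OF hx(2)] by blast
    define N where "N = max \<bar>x1 t1\<bar> \<bar>x2 t2\<bar>"
    have N: "\<forall>t. \<bar>x1 t\<bar> \<le> N" "\<forall>t. \<bar>x2 t\<bar> \<le> N"
      unfolding N_def using \<open>\<forall>t. \<bar>x1 t\<bar> \<le> \<bar>x1 t1\<bar>\<close> \<open>\<forall>t. \<bar>x2 t\<bar> \<le> \<bar>x2 t2\<bar>\<close>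
      by (meson max.cobounded1 max.cobounded2 order_trans)+
    have "\<bar>deriv x1 t\<bar> \<le> alpha * lam2 * (S * N) * D" "\<bar>deriv x2 t\<bar> \<le> alpha * lam2 * (S * N) * D" for t
      using solution_fst_deriv_abs_le[OF sol a'(1,2) S(1) alpha(1) order_refl lam N, of D]
        solution_fst_deriv_abs_le[OF sol' a'(4,3) S(2) alpha(1) order_refl lam N(2,1), of D] bounds
      by auto
    then have "\<bar>x1 t\<bar> \<le> 2*pi*(alpha * lam2 * (S * N) * D)" "\<bar>x2 t\<bar> \<le> 2*pi*(alpha * lam2 * (S * N) * D)" for t
      using hatE_abs_le_deriv_bound[OF hx(1) allI[OF solution_fst_deriv(1)[OF sol]]]
        hatE_abs_le_deriv_bound[OF hx(2) allI[OF solution_fst_deriv(1)[OF sol']]] by blast+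
    then have "N \<le> (alpha * L) * N"
      unfolding N_def L_def by (simp add: ac_simps)
    moreover have "alpha * L < 1"
      using alpha0(3) alpha \<open>0 \<le> L\<close> mult_right_mono[OF alpha(3) \<open>0 \<le> L\<close>] by linarith
    moreover have "0 \<le> N"
      unfolding N_def by simp
    ultimately have "N = 0"
      by (smt (verit) mult_less_cancel_right2)
    then show ?thesis
      using N by auto
  qed
  then show ?thesis
    using alpha0 by blast
qed

theorem lemma3p1:
  fixes a11 a12 a21 a22 b1 b2 lam1 lam2 :: real
  assumes pos_a: "a11 > 0" "a12 > 0" "a21 > 0" "a22 > 0"
    and pos_b: "b1 > 0" "b2 > 0"
    and A1: "\<forall>y::real^2. y \<noteq> 0 \<longrightarrow> (mat2 a11 a12 a21 a22 *v y) \<bullet> y > 0"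
    and A2: "\<exists>mu1 mu2. mu1 > 0 \<and> mu2 > 0 \<and> mu1 \<noteq> mu2 \<and>
               real_eigenvalue (mat2 (b1*a11) (b1*a12) (b2*a21) (b2*a22)) mu1 \<and>
               real_eigenvalue (mat2 (b1*a11) (b1*a12) (b2*a21) (b2*a22)) mu2"
    and lam: "0 < lam1" "lam1 < lam2"
  shows "(\<exists>m0 d1 d2 d3 d4. m0 > 0 \<and> d1 > 0 \<and> d2 > 0 \<and> d3 > 0 \<and> d4 > 0 \<and>
            -b1 < -d1 \<and> -b2 < -d2 \<and>
            (\<forall>lam\<in>{lam1..lam2}. \<forall>alpha\<in>{0..1}. \<forall>tau\<ge>1. \<forall>x1 x2.
               is_solution a11 a12 a21 a22 b1 b2 lam alpha tau x1 x2 \<and> Theta0 b1 b2 x1 x2 \<longrightarrow>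
               (\<forall>t\<in>{0..2*pi}.
                  \<bar>deriv x1 t\<bar> < m0 \<and> \<bar>deriv x2 t\<bar> < m0 \<and>
                  \<bar>deriv (deriv x1) t\<bar> < m0 \<and> \<bar>deriv (deriv x2) t\<bar> < m0 \<and>
                  -d1 < x1 t \<and> x1 t < d3 \<and> -d2 < x2 t \<and> x2 t < d4)))
       \<and> (\<exists>alpha0. 0 < alpha0 \<and> alpha0 < 1 \<and>
            (\<forall>alpha\<in>{0..alpha0}. \<forall>lam\<in>{lam1..lam2}. \<forall>tau\<ge>1. \<forall>x1 x2.
               is_solution a11 a12 a21 a22 b1 b2 lam alpha tau x1 x2 \<and> Theta0 b1 b2 x1 x2 \<longrightarrow>
               x1 = (\<lambda>_. 0) \<and> x2 = (\<lambda>_. 0)))"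
  using solution_a_priori_bounds[OF pos_a pos_b lam] solution_trivial_for_small_alpha[OF pos_a pos_b lam]
  by blast

end
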